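(* Let $(X,d,\kappa)$ be a digital metric space of positive, finite diameter, where $d$ is any $\ell_p$ metric. Let $f: X \to X$ be a function and let $a,b,c \in \left(0, \frac{1}{3\,\mathrm{diam}\, X}\right)$ be such that $d(f(x),f(y)) \le a\,d(x,f(x)) + b\,d(y,f(y)) + c\,d(x,y)$ for all $x,y \in X$ (i.e., $f$ is a Reich contraction map with these constants). Then $f$ is a constant function.
   Context: A digital metric space is a triple $(X,d,\kappa)$ with $X\subset\mathbb{Z}^n$, $\kappa$ an adjacency relation on $X$, and $d$ a metric on $X$. The $\ell_p$ metric ($1\le p\le\infty$) is $d(x,y) = (\sum_i |x_i-y_i|^p)^{1/p}$ for $p<\infty$ and $\max_i|x_i-y_i|$ for $p=\infty$. $\mathrm{diam}\, X = \max\{d(x,y) : x,y\in X\}$. *)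

theory Defs
  imports "HOL-Analysis.Analysis" "HOL-Library.Extended_Real"
begin

text \<open>The l_p metric on Z^n (points are integer vectors indexed by a finite type 'n);
  the exponent p ranges over [1, \<infinity>] as an extended real.\<close>
definition lp_dist :: "ereal \<Rightarrow> int ^ 'n::finite \<Rightarrow> int ^ 'n \<Rightarrow> real" where
  "lp_dist p x y =
     (if p = \<infinity> then Max (range (\<lambda>i. real_of_int \<bar>x $ i - y $ i\<bar>))
      else (\<Sum>i\<in>UNIV. real_of_int \<bar>x $ i - y $ i\<bar> powr real_of_ereal p) powr (1 / real_of_ereal p))"

definition digital_diam :: "('a \<Rightarrow> 'a \<Rightarrow> real) \<Rightarrow> 'a set \<Rightarrow> real" where
  "digital_diam d X = Sup {d x y | x y. x \<in> X \<and> y \<in> X}"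

end

theory Submission
  imports Defs
begin

text \<open>Distinct integer points are at \<open>\<ell>\<^sub>p\<close>-distance at least 1, so the right-hand side of
  the Reich inequality, bounded by \<open>(a + b + c) \<cdot> diam X < 1\<close>, cannot separate two values of
  \<open>f\<close>.\<close>

lemma lp_dist_ge_component:
  assumes "1 \<le> p"
  shows "real_of_int \<bar>x $ i - y $ i\<bar> \<le> lp_dist p x y"
proof (cases "p = \<infinity>")
  case True
  have "real_of_int \<bar>x $ i - y $ i\<bar> \<le> Max (range (\<lambda>j. real_of_int \<bar>x $ j - y $ j\<bar>))"
    by (rule Max_ge) auto
  then show ?thesis
    using True by (simp add: lp_dist_def)
next
  case False
  define q where "q = real_of_ereal p"
  have q: "1 \<le> q"
    using assms False unfolding q_def by (cases p) auto
  have "real_of_int \<bar>x $ i - y $ i\<bar> = (real_of_int \<bar>x $ i - y $ i\<bar> powr q) powr (1 / q)"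
    using q by (simp add: powr_powr)
  also have "\<dots> \<le> (\<Sum>j\<in>UNIV. real_of_int \<bar>x $ j - y $ j\<bar> powr q) powr (1 / q)"
    using q by (intro powr_mono2 member_le_sum) auto
  finally show ?thesis
    using False unfolding lp_dist_def q_def by simp
qed

lemma lp_dist_ge_one:
  assumes "1 \<le> p" and "x \<noteq> y"
  shows "1 \<le> lp_dist p x y"
proof -
  obtain i where "x $ i \<noteq> y $ i"
    using assms(2) by (metis vec_eq_iff)
  then have "1 \<le> real_of_int \<bar>x $ i - y $ i\<bar>"
    by linarith
  also have "\<dots> \<le> lp_dist p x y"
    using assms(1) by (rule lp_dist_ge_component)
  finally show ?thesis .
qed

lemma le_digital_diam:
  assumes "bdd_above {d x y | x y. x \<in> X \<and> y \<in> X}" and "x \<in> X" and "y \<in> X"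
  shows "d x y \<le> digital_diam d X"
  unfolding digital_diam_def by (rule cSup_upper) (use assms in auto)

lemma reich_map_constant_if_discrete:
  fixes d :: "'a \<Rightarrow> 'a \<Rightarrow> real"
  assumes f_into: "\<forall>x\<in>X. f x \<in> X"
    and bounded: "\<And>x y. x \<in> X \<Longrightarrow> y \<in> X \<Longrightarrow> d x y \<le> D"
    and discrete: "\<And>x y. x \<in> X \<Longrightarrow> y \<in> X \<Longrightarrow> x \<noteq> y \<Longrightarrow> 1 \<le> d x y"
    and nonneg: "0 \<le> a" "0 \<le> b" "0 \<le> c"
    and small: "(a + b + c) * D < 1"
    and reich: "\<forall>x\<in>X. \<forall>y\<in>X. d (f x) (f y) \<le> a * d x (f x) + b * d y (f y) + c * d x y"
  shows "\<exists>k. \<forall>x\<in>X. f x = k"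
proof -
  have "f x = f y" if "x \<in> X" "y \<in> X" for x y
  proof (rule ccontr)
    assume "f x \<noteq> f y"
    then have "1 \<le> d (f x) (f y)"
      using discrete f_into that by blast
    also have "\<dots> \<le> a * d x (f x) + b * d y (f y) + c * d x y"
      using reich that by blast
    also have "\<dots> \<le> a * D + b * D + c * D"
      using that f_into nonneg by (intro add_mono mult_left_mono bounded) auto
    also have "\<dots> < 1"
      using small by (simp add: distrib_right)
    finally show False by simp
  qed
  then show ?thesis by blast
qed

theorem mainTheorem7:
  fixes X :: "(int ^ 'n::finite) set" and p :: ereal
    and f :: "int ^ 'n \<Rightarrow> int ^ 'n" and a b c :: real
  defines "d \<equiv> lp_dist p"
  assumes p: "1 \<le> p"
    and finite_diam: "bdd_above {d x y | x y. x \<in> X \<and> y \<in> X}"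
    and pos_diam: "digital_diam d X > 0"
    and f_into: "\<forall>x\<in>X. f x \<in> X"
    and a: "0 < a" "a < 1 / (3 * digital_diam d X)"
    and b: "0 < b" "b < 1 / (3 * digital_diam d X)"
    and c: "0 < c" "c < 1 / (3 * digital_diam d X)"
    and reich: "\<forall>x\<in>X. \<forall>y\<in>X. d (f x) (f y) \<le> a * d x (f x) + b * d y (f y) + c * d x y"
  shows "\<exists>k. \<forall>x\<in>X. f x = k"
proof (rule reich_map_constant_if_discrete[OF f_into _ _ _ _ _ _ reich])
  show "d x y \<le> digital_diam d X" if "x \<in> X" "y \<in> X" for x y
    using finite_diam that by (rule le_digital_diam)
  show "1 \<le> d x y" if "x \<noteq> y" for x y
    unfolding d_def using p that by (rule lp_dist_ge_one)
  show "(a + b + c) * digital_diam d X < 1"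
    using a b c pos_diam by (simp add: field_simps)
qed (use a b c in auto)

end
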